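(* There is an absolute constant $c>0$ such that for every sum-bucket game on a simple graph with $n\ge2$ nodes whose strategy paths are all simple, and every optimal routing $\mathbf p^*$ with $\overline C^*=\overline C(\mathbf p^* )$, $\overline D^*=\overline D(\mathbf p^* )$, the price of anarchy satisfies $$PoA\le c\cdot\frac{\overline C^*\cdot\overline D^*}{\overline C^*+\overline D^*}\cdot\lg^2 n.$$
   Context: A routing game $(\mathbf N,G,\mathcal P)$: players $\{1,\dots,N\}$ ($N\ge1$), a simple graph $G$ with $n$ nodes, and for each player $i$ a nonempty finite set $\mathcal P_i$ of simple paths (each with at least one edge) from $u_i$ to $v_i$; $\mathcal P=\bigcup_i\mathcal P_i$, $L=\max_{p\in\mathcal P}|p|$ (number of edges). A routing is $\mathbf p=[p_1,\dots,p_N]$, $p_i\in\mathcal P_i$. Sum-bucket game: for $k=0,\dots,\lceil\lg L\rceil$ bucket $B_k$ = paths in $\mathcal P$ with length in $[2^k,2^{k+1})$, $B(q)$ = bucket index of $q$; normalized length $\overline D_q=2^{B(q)+1}-1$; $\overline C_{e,q}(\mathbf p)$ = number of players $j$ with $e\in p_j$ and $B(p_j)=B(q)$; $\overline C_q(\mathbf p)=\max_{e\in q}\overline C_{e,q}(\mathbf p)$; $\overline C_i=\overline C_{p_i}$, $\overline D_i=\overline D_{p_i}$; player cost $pc_i=\overline C_i+\overline D_i$; $\overline C(\mathbf p)=\max_i\overline C_i$, $\overline D(\mathbf p)=\max_i\overline D_i$; social cost $SC(\mathbf p)=\overline C(\mathbf p)+\overline D(\mathbf p)$. A Nash-routing: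 no player can strictly lower its cost by unilaterally changing its path within $\mathcal P_i$; an optimal routing minimizes $SC$, with value $SC^*$. $PoA=\sup_{\mathbf p}SC(\mathbf p)/SC^*$ over all Nash-routings $\mathbf p$ (which exist). $\lg=\log_2$. *)

theory Defs
  imports Complex_Main
begin

definition simple_graph :: "nat set \<Rightarrow> nat set set \<Rightarrow> bool" where
  "simple_graph V E \<longleftrightarrow> finite V \<and> (\<forall>e\<in>E. card e = 2 \<and> e \<subseteq> V)"

definition path_edges :: "nat list \<Rightarrow> nat set set" where
  "path_edges q = {{q ! k, q ! Suc k} | k. Suc k < length q}"

definition plen :: "nat list \<Rightarrow> nat" where
  "plen q = length q - 1"

definition simple_path :: "nat set \<Rightarrow> nat set set \<Rightarrow> nat \<Rightarrow> nat \<Rightarrow> nat list \<Rightarrow> bool" where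
  "simple_path V E u w q \<longleftrightarrow> length q \<ge> 2 \<and> distinct q \<and> set q \<subseteq> V \<and>
     hd q = u \<and> last q = w \<and> path_edges q \<subseteq> E"

definition routing_game ::
  "nat set \<Rightarrow> nat set set \<Rightarrow> nat \<Rightarrow> (nat \<Rightarrow> nat list set) \<Rightarrow> (nat \<Rightarrow> nat) \<Rightarrow> (nat \<Rightarrow> nat) \<Rightarrow> bool" where
  "routing_game V E N P src dst \<longleftrightarrow> simple_graph V E \<and> N \<ge> 1 \<and>
     (\<forall>i\<in>{1..N}. finite (P i) \<and> P i \<noteq> {} \<and> (\<forall>q\<in>P i. simple_path V E (src i) (dst i) q))"

definition is_routing :: "nat \<Rightarrow> (nat \<Rightarrow> nat list set) \<Rightarrow> (nat \<Rightarrow> nat list) \<Rightarrow> bool" where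
  "is_routing N P p \<longleftrightarrow> (\<forall>i\<in>{1..N}. p i \<in> P i)"

definition bucket :: "nat list \<Rightarrow> nat" where
  "bucket q = nat \<lfloor>log 2 (real (plen q))\<rfloor>"

definition Dbar :: "nat list \<Rightarrow> nat" where
  "Dbar q = 2 ^ (bucket q + 1) - 1"

definition Cbar_edge :: "nat \<Rightarrow> (nat \<Rightarrow> nat list) \<Rightarrow> nat set \<Rightarrow> nat list \<Rightarrow> nat" where
  "Cbar_edge N p e q = card {j\<in>{1..N}. e \<in> path_edges (p j) \<and> bucket (p j) = bucket q}"

definition Cbar_path :: "nat \<Rightarrow> (nat \<Rightarrow> nat list) \<Rightarrow> nat list \<Rightarrow> nat" where
  "Cbar_path N p q = Max ((\<lambda>e. Cbar_edge N p e q) ` path_edges q)"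

definition player_cost :: "nat \<Rightarrow> (nat \<Rightarrow> nat list) \<Rightarrow> nat \<Rightarrow> nat" where
  "player_cost N p i = Cbar_path N p (p i) + Dbar (p i)"

definition Cbar :: "nat \<Rightarrow> (nat \<Rightarrow> nat list) \<Rightarrow> nat" where
  "Cbar N p = Max ((\<lambda>i. Cbar_path N p (p i)) ` {1..N})"

definition Dbar_max :: "nat \<Rightarrow> (nat \<Rightarrow> nat list) \<Rightarrow> nat" where
  "Dbar_max N p = Max ((\<lambda>i. Dbar (p i)) ` {1..N})"

definition social_cost :: "nat \<Rightarrow> (nat \<Rightarrow> nat list) \<Rightarrow> nat" where
  "social_cost N p = Cbar N p + Dbar_max N p"

definition nash_routing :: "nat \<Rightarrow> (nat \<Rightarrow> nat list set) \<Rightarrow> (nat \<Rightarrow> nat list) \<Rightarrow> bool" where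
  "nash_routing N P p \<longleftrightarrow> is_routing N P p \<and>
     (\<forall>i\<in>{1..N}. \<forall>q\<in>P i. player_cost N p i \<le> player_cost N (p(i := q)) i)"

definition optimal_routing :: "nat \<Rightarrow> (nat \<Rightarrow> nat list set) \<Rightarrow> (nat \<Rightarrow> nat list) \<Rightarrow> bool" where
  "optimal_routing N P p \<longleftrightarrow> is_routing N P p \<and>
     (\<forall>r. is_routing N P r \<longrightarrow> social_cost N p \<le> social_cost N r)"

end

theory Submission
  imports Defs
begin

text \<open>
  Fix an optimal routing s with congestion Cs and dilation Ds, and a Nash routing p.  For a
  threshold t call an (edge, bucket) pair heavy if the bucket occurs in s and at least t Nash
  players of that bucket use the edge.  Double counting (each Nash player of bucket b meets at
  most Dbar <= Ds heavy pairs) and Nash stability (a player on a heavy pair of load u could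
  switch to its optimal path, which therefore carries load >= u - Ds somewhere, and at most Cs
  players share such an edge optimally) give
      |heavy u| * u <= |heavy (u - Ds)| * Cs * Ds.
  Above 2 Cs Ds the number of heavy pairs thus halves with every step of Ds; since there are at
  most n^3 pairs, every load seen by a Nash player is O(Cs Ds + Ds lg n).  Hence every player
  cost, and so the social cost, is O(Cs Ds lg^2 n), while the optimum costs Cs + Ds.
\<close>

lemma card_mult_le_by_incidences:
  fixes R :: "'a \<Rightarrow> 'b \<Rightarrow> bool"
  assumes "finite X" "finite Y"
    and many: "\<And>x. x \<in> X \<Longrightarrow> u \<le> card {y\<in>Y. R x y}"
    and few: "\<And>y. y \<in> Y \<Longrightarrow> card {x\<in>X. R x y} \<le> d"
  shows "card X * u \<le> card Y * d"
proof -
  have "card X * u = (\<Sum>x\<in>X. u)" by simp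
  also have "\<dots> \<le> (\<Sum>x\<in>X. card {y\<in>Y. R x y})" using many by (rule sum_mono)
  also have "\<dots> = (\<Sum>y\<in>Y. card {x\<in>X. R x y})"
    using assms(1,2) by (rule sum_multicount_gen) simp
  also have "\<dots> \<le> (\<Sum>y\<in>Y. d)" using few by (rule sum_mono)
  finally show ?thesis by simp
qed

lemma card_le_by_fibres:
  assumes "finite S" "finite T" "g ` S \<subseteq> T"
    and fibre: "\<And>y. y \<in> T \<Longrightarrow> card {x\<in>S. g x = y} \<le> c"
  shows "card S \<le> card T * c"
proof -
  have "card S = (\<Sum>y\<in>T. card {x\<in>S. g x = y})"
    using sum.group[OF assms(1-3), of "\<lambda>_. 1::nat"] by simp
  also have "\<dots> \<le> (\<Sum>y\<in>T. c)" using fibre by (rule sum_mono)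
  finally show ?thesis by simp
qed

lemma halving_iterated:
  fixes a :: "nat \<Rightarrow> nat"
  assumes decay: "\<And>u. D \<le> u \<Longrightarrow> a u * u \<le> a (u - D) * K"
    and K: "K > 0" and t: "2 * K \<le> t"
  shows "2 ^ r * a (t + r * D) \<le> a t"
proof (induction r)
  case 0 show ?case by simp
next
  case (Suc r)
  let ?u = "t + Suc r * D"
  have "a ?u * (2 * K) \<le> a ?u * ?u" using t by simp
  also have "\<dots> \<le> a (?u - D) * K" by (rule decay) simp
  also have "?u - D = t + r * D" by simp
  finally have "2 * a ?u \<le> a (t + r * D)" using K by simp
  then have "2 ^ Suc r * a ?u \<le> 2 ^ r * a (t + r * D)"
    by (metis mult.assoc mult.commute mult_le_mono2 power_Suc)
  with Suc.IH show ?case by linarith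
qed

lemma level_bound:
  fixes a :: "nat \<Rightarrow> nat"
  assumes decay: "\<And>u. D \<le> u \<Longrightarrow> a u * u \<le> a (u - D) * K"
    and K: "K > 0" and D: "D > 0"
    and bounded: "\<And>t. a t \<le> M" and occupied: "a T \<ge> 1"
  shows "real T \<le> real (2 * K + D) + real D * log 2 (real M)"
proof (cases "T < 2 * K")
  case True
  have "M \<ge> 1" using bounded[of T] occupied by linarith
  then have "0 \<le> real D * log 2 (real M)" by simp
  then show ?thesis using True by simp
next
  case False
  define r where "r = (T - 2 * K) div D"
  define t where "t = T - r * D"
  have rD: "r * D \<le> T - 2 * K" and rest: "T - 2 * K < r * D + D"
    unfolding r_def using D div_mult_mod_eq[of "T - 2 * K" D] mod_less_divisor[OF D, of "T - 2 * K"]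
    by linarith+
  then have t: "2 * K \<le> t" and T: "T = t + r * D" using False unfolding t_def by linarith+
  have "2 ^ r \<le> 2 ^ r * a T" using occupied by simp
  also have "\<dots> \<le> a t" using halving_iterated[OF decay K t, of r] T by simp
  also have "\<dots> \<le> M" by (rule bounded)
  finally have "(2::real) ^ r \<le> real M" by (metis of_nat_le_iff of_nat_numeral of_nat_power)
  moreover have "(0::real) < 2 ^ r" by simp
  ultimately have "log 2 (2 ^ r) \<le> log 2 (real M)"
    using less_le_trans[of 0 "(2::real) ^ r" "real M"] by (subst log_le_cancel_iff) auto
  then have "real r \<le> log 2 (real M)" by simp
  then have rounds: "real r * real D \<le> real D * log 2 (real M)"
    by (metis mult.commute mult_left_mono of_nat_0_le_iff)
  have "T \<le> 2 * K + D + r * D" using False rest by linarith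
  then have "real T \<le> real (2 * K + D) + real r * real D"
    by (metis of_nat_add of_nat_le_iff of_nat_mult)
  with rounds show ?thesis by linarith
qed

lemma bucket_bounds:
  assumes "plen q \<ge> 1"
  shows "2 ^ bucket q \<le> plen q" and "plen q < 2 ^ (bucket q + 1)"
proof -
  have "\<lfloor>log (real (2::nat)) (real (plen q))\<rfloor> = int (bucket q)"
    using assms unfolding bucket_def by simp
  then show "2 ^ bucket q \<le> plen q" and "plen q < 2 ^ (bucket q + 1)"
    using floor_log_nat_eq_powr_iff[of 2 "plen q" "bucket q"] assms by simp_all
qed

lemma plen_le_Dbar: "plen q \<ge> 1 \<Longrightarrow> plen q \<le> Dbar q"
  using bucket_bounds(2)[of q] unfolding Dbar_def by simp

lemma Dbar_pos: "Dbar q \<ge> 1"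
proof -
  have "(2::nat) \<le> 2 ^ (bucket q + 1)" by simp
  then show ?thesis unfolding Dbar_def by linarith
qed

lemma bucket_less_plen: "plen q \<ge> 1 \<Longrightarrow> bucket q < plen q"
  using bucket_bounds(1)[of q] less_exp[of "bucket q"] by linarith

lemma path_edges_image: "path_edges q = (\<lambda>k. {q ! k, q ! Suc k}) ` {..<plen q}"
  unfolding path_edges_def plen_def by auto

lemma finite_path_edges: "finite (path_edges q)"
  unfolding path_edges_image by simp

lemma card_path_edges: "card (path_edges q) \<le> plen q"
  unfolding path_edges_image using card_image_le[of "{..<plen q}"] by simp

lemma simple_path_facts:
  assumes "simple_path V E u w q" "finite V"
  shows "1 \<le> plen q" "plen q < card V" "path_edges q \<subseteq> E" "path_edges q \<noteq> {}"
proof -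
  have "length q = card (set q)" using assms(1) distinct_card unfolding simple_path_def by metis
  also have "\<dots> \<le> card V" using assms card_mono unfolding simple_path_def by metis
  finally show "1 \<le> plen q" "plen q < card V" "path_edges q \<subseteq> E"
    using assms(1) unfolding simple_path_def plen_def by auto
  show "path_edges q \<noteq> {}"
    using assms(1) unfolding simple_path_def path_edges_def by (auto intro!: exI[of _ 0])
qed

lemma simple_graph_edges:
  assumes "simple_graph V E"
  shows "finite E" and "card E \<le> card V ^ 2"
proof -
  have fin: "finite V" using assms unfolding simple_graph_def by auto
  have sub: "E \<subseteq> (\<lambda>(x, y). {x, y}) ` (V \<times> V)"
  proof
    fix e assume "e \<in> E"
    then have "card e = 2" "e \<subseteq> V" using assms unfolding simple_graph_def by auto
    then obtain x y where "e = {x, y}" by (meson card_2_iff)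
    with \<open>e \<subseteq> V\<close> show "e \<in> (\<lambda>(x, y). {x, y}) ` (V \<times> V)" by auto
  qed
  then show "finite E" using fin finite_subset by blast
  have "card E \<le> card ((\<lambda>(x, y). {x, y}) ` (V \<times> V))" using sub fin by (intro card_mono) auto
  also have "\<dots> \<le> card (V \<times> V)" using fin by (intro card_image_le) simp
  finally show "card E \<le> card V ^ 2" by (simp add: card_cartesian_product power2_eq_square)
qed

lemma edge_count_le_Cbar_path:
  assumes "f \<in> path_edges q"
  shows "Cbar_edge M r f q \<le> Cbar_path M r q"
  unfolding Cbar_path_def using assms by (intro Max_ge) (auto simp: finite_path_edges)

lemma Cbar_path_le_Cbar: "i \<in> {1..N} \<Longrightarrow> Cbar_path N r (r i) \<le> Cbar N r"
  unfolding Cbar_def by (intro Max_ge) auto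

text \<open>The social cost is at most twice the largest player cost, since both the congestion and
  the dilation term are attained by some player.\<close>
lemma social_cost_le_twice_max_cost:
  assumes "N \<ge> 1" and cost: "\<And>i. i \<in> {1..N} \<Longrightarrow> real (player_cost N p i) \<le> B"
  shows "real (social_cost N p) \<le> 2 * B"
proof -
  have ne: "{1..N} \<noteq> {}" using assms(1) by simp
  have "Cbar N p \<in> (\<lambda>i. Cbar_path N p (p i)) ` {1..N}"
    unfolding Cbar_def using ne by (intro Max_in) auto
  then obtain i where i: "i \<in> {1..N}" "Cbar N p = Cbar_path N p (p i)" by blast
  have "Dbar_max N p \<in> (\<lambda>i. Dbar (p i)) ` {1..N}"
    unfolding Dbar_max_def using ne by (intro Max_in) auto
  then obtain k where k: "k \<in> {1..N}" "Dbar_max N p = Dbar (p k)" by blast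
  have "social_cost N p \<le> player_cost N p i + player_cost N p k"
    using i k unfolding social_cost_def player_cost_def by simp
  then have "real (social_cost N p) \<le> real (player_cost N p i) + real (player_cost N p k)" by simp
  with cost[OF i(1)] cost[OF k(1)] show ?thesis by linarith
qed

lemma cost_terms_le:
  fixes c d L :: real
  assumes "c \<ge> 1" "d \<ge> 1" "L \<ge> 1"
  shows "2 * c * d + 2 * d + 1 + 3 * d * L \<le> 8 * c * d * L\<^sup>2"
proof -
  have "L * 1 \<le> L * L" using assms(3) by (intro mult_left_mono) auto
  then have "L \<le> L\<^sup>2" by (simp add: power2_eq_square)
  then have L2: "L \<le> L\<^sup>2" "1 \<le> L\<^sup>2" using assms(3) by linarith+
  have "1 * d \<le> c * d" using assms by (intro mult_right_mono) auto
  then have cd: "1 \<le> c * d" "d \<le> c * d" using assms(2) by linarith+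
  have "c * d * 1 \<le> c * d * L\<^sup>2" using cd L2 by (intro mult_left_mono) auto
  moreover have "d * L \<le> c * d * L\<^sup>2"
    using mult_mono[OF cd(2) L2(1)] assms by simp
  ultimately show ?thesis using cd by simp
qed

locale nash_vs_optimum =
  fixes V :: "nat set" and E :: "nat set set" and N :: nat and P :: "nat \<Rightarrow> nat list set"
    and src dst :: "nat \<Rightarrow> nat" and s p :: "nat \<Rightarrow> nat list"
  assumes game: "routing_game V E N P src dst" and two_nodes: "card V \<ge> 2"
    and optimal: "optimal_routing N P s" and nash: "nash_routing N P p"
begin

abbreviation Cs :: nat where "Cs \<equiv> Cbar N s"
abbreviation Ds :: nat where "Ds \<equiv> Dbar_max N s"

definition uses :: "nat \<Rightarrow> nat set \<times> nat \<Rightarrow> bool" where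
  "uses j a \<longleftrightarrow> fst a \<in> path_edges (p j) \<and> bucket (p j) = snd a"

definition load :: "nat set \<Rightarrow> nat \<Rightarrow> nat" where
  "load f b = card {j\<in>{1..N}. uses j (f, b)}"

definition opt_buckets :: "nat set" where
  "opt_buckets = (\<lambda>j. bucket (s j)) ` {1..N}"

definition heavy :: "nat \<Rightarrow> (nat set \<times> nat) set" where
  "heavy t = {(f, b). f \<in> E \<and> b \<in> opt_buckets \<and> t \<le> load f b}"

definition heavy_users :: "nat \<Rightarrow> nat set" where
  "heavy_users u = {j\<in>{1..N}. \<exists>a\<in>heavy u. uses j a}"

lemma finite_V: "finite V"
  using game unfolding routing_game_def simple_graph_def by auto

lemma players_nonempty: "N \<ge> 1"
  using game unfolding routing_game_def by auto

lemma nash_path: "j \<in> {1..N} \<Longrightarrow> simple_path V E (src j) (dst j) (p j)"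
  using game nash unfolding routing_game_def nash_routing_def is_routing_def by blast

lemma optimal_path: "j \<in> {1..N} \<Longrightarrow> simple_path V E (src j) (dst j) (s j)"
  using game optimal unfolding routing_game_def optimal_routing_def is_routing_def by blast

lemma Dbar_opt_le: "j \<in> {1..N} \<Longrightarrow> Dbar (s j) \<le> Ds"
  unfolding Dbar_max_def by (intro Max_ge) auto

lemma Ds_pos: "Ds \<ge> 1"
  using Dbar_opt_le[of 1] players_nonempty Dbar_pos[of "s 1"] by auto

lemma optimal_load_le: "card {i\<in>{1..N}. f \<in> path_edges (s i) \<and> bucket (s i) = b} \<le> Cs"
proof (cases "\<exists>j\<in>{1..N}. f \<in> path_edges (s j) \<and> bucket (s j) = b")
  case True
  then obtain j where j: "j \<in> {1..N}" "f \<in> path_edges (s j)" "b = bucket (s j)" by blast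
  have "Cbar_edge N s f (s j) \<le> Cs"
    using edge_count_le_Cbar_path[OF j(2)] Cbar_path_le_Cbar[OF j(1)] by (rule le_trans)
  then show ?thesis using j unfolding Cbar_edge_def by simp
next
  case False
  then have "{i\<in>{1..N}. f \<in> path_edges (s i) \<and> bucket (s i) = b} = {}" by blast
  then show ?thesis by (metis card.empty le0)
qed

lemma Cs_pos: "Cs \<ge> 1"
proof -
  have j: "1 \<in> {1..N}" using players_nonempty by simp
  obtain f where f: "f \<in> path_edges (s 1)"
    using simple_path_facts(4)[OF optimal_path[OF j] finite_V] by blast
  have "{i\<in>{1..N}. f \<in> path_edges (s i) \<and> bucket (s i) = bucket (s 1)} \<noteq> {}" using f j by auto
  then have "1 \<le> Cbar_edge N s f (s 1)" unfolding Cbar_edge_def by (simp add: Suc_le_eq card_gt_0_iff)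
  also have "\<dots> \<le> Cs"
    using edge_count_le_Cbar_path[OF f] Cbar_path_le_Cbar[OF j] by (rule le_trans)
  finally show ?thesis .
qed

lemma cost_lower:
  assumes "j \<in> {1..N}" "e \<in> path_edges (p j)"
  shows "load e (bucket (p j)) + Dbar (p j) \<le> player_cost N p j"
  using edge_count_le_Cbar_path[OF assms(2), of N p]
  unfolding player_cost_def Cbar_edge_def load_def uses_def by simp

text \<open>Nash stability: deviating to the optimal path adds at most one player to each of its
  edges, so the cost is bounded by the load on some optimal edge plus 1 + Ds.\<close>
lemma cost_upper:
  assumes j: "j \<in> {1..N}"
  obtains f where "f \<in> path_edges (s j)" "player_cost N p j \<le> load f (bucket (s j)) + 1 + Ds"
proof -
  define p' where "p' = p(j := s j)"
  have "s j \<in> P j" using optimal j unfolding optimal_routing_def is_routing_def by blast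
  then have stable: "player_cost N p j \<le> player_cost N p' j"
    using nash j unfolding nash_routing_def p'_def by blast
  have "path_edges (s j) \<noteq> {}" using simple_path_facts(4)[OF optimal_path[OF j] finite_V] .
  then have "Cbar_path N p' (s j) \<in> (\<lambda>e. Cbar_edge N p' e (s j)) ` path_edges (s j)"
    unfolding Cbar_path_def by (intro Max_in) (auto simp: finite_path_edges)
  then obtain f where f: "f \<in> path_edges (s j)" and max: "Cbar_path N p' (s j) = Cbar_edge N p' f (s j)"
    by blast
  have "{i\<in>{1..N}. f \<in> path_edges (p' i) \<and> bucket (p' i) = bucket (s j)}
        \<subseteq> insert j {i\<in>{1..N}. f \<in> path_edges (p i) \<and> bucket (p i) = bucket (s j)}"
    unfolding p'_def by auto
  then have "Cbar_edge N p' f (s j)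
      \<le> card (insert j {i\<in>{1..N}. f \<in> path_edges (p i) \<and> bucket (p i) = bucket (s j)})"
    unfolding Cbar_edge_def by (intro card_mono) auto
  also have "\<dots> \<le> load f (bucket (s j)) + 1"
    unfolding load_def uses_def by (simp add: card_insert_if)
  finally have "Cbar_edge N p' f (s j) \<le> load f (bucket (s j)) + 1" .
  then have "player_cost N p' j \<le> load f (bucket (s j)) + 1 + Ds"
    using max Dbar_opt_le[OF j] unfolding player_cost_def p'_def by simp
  with stable f show thesis using that by simp
qed

text \<open>There are fewer than n buckets, hence at most n^3 heavy pairs.\<close>
lemma opt_buckets_bound: "opt_buckets \<subseteq> {..<card V}"
proof
  fix b assume "b \<in> opt_buckets"
  then obtain j where j: "j \<in> {1..N}" and b: "b = bucket (s j)" unfolding opt_buckets_def by blast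
  have "1 \<le> plen (s j)" "plen (s j) < card V"
    using simple_path_facts[OF optimal_path[OF j] finite_V] by auto
  then show "b \<in> {..<card V}" using bucket_less_plen[of "s j"] b by simp
qed

lemma finite_heavy: "finite (heavy t)" and card_heavy: "card (heavy t) \<le> card V ^ 3"
proof -
  have E: "finite E" "card E \<le> card V ^ 2"
    using simple_graph_edges game unfolding routing_game_def by auto
  have B: "finite opt_buckets" "card opt_buckets \<le> card V"
    using opt_buckets_bound finite_subset card_mono by (metis card_lessThan finite_lessThan)+
  have sub: "heavy t \<subseteq> E \<times> opt_buckets" unfolding heavy_def by auto
  then show "finite (heavy t)" using E B finite_subset by blast
  have "card (heavy t) \<le> card E * card opt_buckets"
    using sub E B card_mono[of "E \<times> opt_buckets"] by (simp add: card_cartesian_product)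
  also have "\<dots> \<le> card V ^ 2 * card V" using E B by (intro mult_mono) auto
  finally show "card (heavy t) \<le> card V ^ 3" by (simp add: power3_eq_cube power2_eq_square)
qed

text \<open>Double counting: every heavy pair is used by at least u Nash players, and a Nash path
  in bucket b uses at most Dbar pairs, which is at most Ds when b is an optimal bucket.\<close>
lemma heavy_users_lower: "card (heavy u) * u \<le> card (heavy_users u) * Ds"
proof (rule card_mult_le_by_incidences[OF finite_heavy, where R = "\<lambda>a j. uses j a"])
  show "finite (heavy_users u)" unfolding heavy_users_def by simp
next
  fix a assume a: "a \<in> heavy u"
  then have "{j\<in>heavy_users u. uses j a} = {j\<in>{1..N}. uses j a}"
    unfolding heavy_users_def by auto
  then show "u \<le> card {j\<in>heavy_users u. uses j a}"
    using a unfolding heavy_def load_def by auto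
next
  fix j assume "j \<in> heavy_users u"
  then obtain a where j: "j \<in> {1..N}" and a: "a \<in> heavy u" "uses j a"
    unfolding heavy_users_def by blast
  obtain i where i: "i \<in> {1..N}" "bucket (p j) = bucket (s i)"
    using a unfolding heavy_def opt_buckets_def uses_def by auto
  have "{a\<in>heavy u. uses j a} \<subseteq> path_edges (p j) \<times> {bucket (p j)}"
    unfolding uses_def by auto
  then have "card {a\<in>heavy u. uses j a} \<le> card (path_edges (p j))"
    using card_mono[of "path_edges (p j) \<times> {bucket (p j)}"]
    by (simp add: finite_path_edges card_cartesian_product)
  also have "\<dots> \<le> Dbar (p j)"
    using card_path_edges plen_le_Dbar simple_path_facts(1)[OF nash_path[OF j] finite_V] le_trans
    by blast
  also have "\<dots> = Dbar (s i)" using i unfolding Dbar_def by simp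
  also have "\<dots> \<le> Ds" using Dbar_opt_le[OF i(1)] .
  finally show "card {a\<in>heavy u. uses j a} \<le> Ds" .
qed

text \<open>Nash stability: a user of a pair of load u could deviate to its optimal path, so that path
  has an edge of load at least u - Ds in its optimal bucket.\<close>
lemma heavy_user_escape:
  assumes "j \<in> heavy_users u"
  obtains f where "f \<in> path_edges (s j)" "(f, bucket (s j)) \<in> heavy (u - Ds)"
proof -
  obtain a where j: "j \<in> {1..N}" and a: "a \<in> heavy u" "uses j a"
    using assms unfolding heavy_users_def by blast
  have "u + Dbar (p j) \<le> player_cost N p j"
    using a cost_lower[OF j, of "fst a"] unfolding heavy_def uses_def by auto
  moreover obtain f where f: "f \<in> path_edges (s j)"
    and "player_cost N p j \<le> load f (bucket (s j)) + 1 + Ds"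
    using cost_upper[OF j] by blast
  ultimately have "u - Ds \<le> load f (bucket (s j))" using Dbar_pos[of "p j"] by linarith
  moreover have "f \<in> E" using f simple_path_facts(3)[OF optimal_path[OF j] finite_V] by blast
  moreover have "bucket (s j) \<in> opt_buckets" using j unfolding opt_buckets_def by blast
  ultimately show thesis using f that unfolding heavy_def by auto
qed

text \<open>Mapping each heavy user to the pair it escapes to: at most Cs optimal players share a
  pair, so there are at most Cs heavy users per heavy pair of the lower threshold.\<close>
lemma heavy_users_upper: "card (heavy_users u) \<le> card (heavy (u - Ds)) * Cs"
proof -
  have "\<forall>j\<in>heavy_users u. \<exists>f. f \<in> path_edges (s j) \<and> (f, bucket (s j)) \<in> heavy (u - Ds)"
    using heavy_user_escape by blast
  then obtain g where g: "\<And>j. j \<in> heavy_users u \<Longrightarrow>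
      g j \<in> path_edges (s j) \<and> (g j, bucket (s j)) \<in> heavy (u - Ds)"
    by metis
  show ?thesis
  proof (rule card_le_by_fibres[where g = "\<lambda>j. (g j, bucket (s j))"])
    show "finite (heavy_users u)" unfolding heavy_users_def by simp
    show "finite (heavy (u - Ds))" by (rule finite_heavy)
    show "(\<lambda>j. (g j, bucket (s j))) ` heavy_users u \<subseteq> heavy (u - Ds)" using g by auto
  next
    fix a assume "a \<in> heavy (u - Ds)"
    obtain f b where ab: "a = (f, b)" by (cases a)
    have sub: "{j\<in>heavy_users u. (g j, bucket (s j)) = a}
          \<subseteq> {i\<in>{1..N}. f \<in> path_edges (s i) \<and> bucket (s i) = b}"
      using g ab unfolding heavy_users_def by auto
    show "card {j\<in>heavy_users u. (g j, bucket (s j)) = a} \<le> Cs"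
      using optimal_load_le[of f b] card_mono[OF _ sub] le_trans by simp
  qed
qed

lemma heavy_decay: "card (heavy u) * u \<le> card (heavy (u - Ds)) * (Cs * Ds)"
proof -
  have "card (heavy u) * u \<le> card (heavy_users u) * Ds" by (rule heavy_users_lower)
  also have "\<dots> \<le> card (heavy (u - Ds)) * Cs * Ds"
    using heavy_users_upper by simp
  finally show ?thesis by (simp add: mult.assoc)
qed

text \<open>Every Nash player pays O(Cs Ds + Ds lg n): the load it escapes to on its optimal path is the
  threshold of a nonempty heavy set, and heavy sets die out after O(lg n) rounds of Ds.\<close>
lemma player_cost_bound:
  assumes j: "j \<in> {1..N}"
  shows "real (player_cost N p j) \<le> 2 * Cs * Ds + 2 * Ds + 1 + 3 * Ds * log 2 (card V)"
proof -
  obtain f where f: "f \<in> path_edges (s j)"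
    and cost: "player_cost N p j \<le> load f (bucket (s j)) + 1 + Ds"
    using cost_upper[OF j] by blast
  define T where "T = load f (bucket (s j))"
  have "(f, bucket (s j)) \<in> heavy T"
    using f simple_path_facts(3)[OF optimal_path[OF j] finite_V] j
    unfolding heavy_def T_def opt_buckets_def by auto
  then have occupied: "card (heavy T) \<ge> 1"
    using finite_heavy by (simp add: Suc_le_eq card_gt_0_iff) blast
  have "real T \<le> real (2 * (Cs * Ds) + Ds) + real Ds * log 2 (real (card V ^ 3))"
    using level_bound[of Ds "\<lambda>t. card (heavy t)" "Cs * Ds" "card V ^ 3" T]
      heavy_decay Cs_pos Ds_pos card_heavy occupied by simp
  also have "log 2 (real (card V ^ 3)) = 3 * log 2 (card V)"
    by (simp add: log_nat_power)
  finally show ?thesis using cost unfolding T_def by simp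
qed

lemma social_cost_bound:
  "real (social_cost N p) \<le> 16 * real Cs * real Ds * (log 2 (card V))\<^sup>2"
proof -
  have "log 2 (card V) \<ge> 1" using two_nodes by simp
  then have "2 * Cs * Ds + 2 * Ds + 1 + 3 * Ds * log 2 (card V) \<le> 8 * Cs * Ds * (log 2 (card V))\<^sup>2"
    using cost_terms_le[of Cs Ds "log 2 (card V)"] Cs_pos Ds_pos by simp
  then have "real (player_cost N p j) \<le> 8 * Cs * Ds * (log 2 (card V))\<^sup>2" if "j \<in> {1..N}" for j
    using player_cost_bound[OF that] by linarith
  then have "real (social_cost N p) \<le> 2 * (8 * Cs * Ds * (log 2 (card V))\<^sup>2)"
    by (rule social_cost_le_twice_max_cost[OF players_nonempty])
  then show ?thesis by simp
qed

end

text \<open>The theorem with c = 16: the optimal social cost is Cs + Ds, and the Nash social cost is at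
  most 16 Cs Ds lg^2 n.\<close>
theorem mainTheorem15:
  shows "\<exists>c::real. c > 0 \<and>
    (\<forall>V E N P src dst pstar.
       routing_game V E N P src dst \<and> card V \<ge> 2 \<and> optimal_routing N P pstar \<longrightarrow>
       (\<forall>p. nash_routing N P p \<longrightarrow>
          real (social_cost N p) / real (social_cost N pstar)
          \<le> c * (real (Cbar N pstar) * real (Dbar_max N pstar)
                 / (real (Cbar N pstar) + real (Dbar_max N pstar)))
              * (log 2 (real (card V)))\<^sup>2))"
proof (intro exI[of _ 16] conjI allI impI)
  fix V E N P src dst pstar p
  assume "routing_game V E N P src dst \<and> card V \<ge> 2 \<and> optimal_routing N P pstar"
    and "nash_routing N P p"
  then interpret nash_vs_optimum V E N P src dst pstar p by unfold_locales auto
  have opt_cost: "real (social_cost N pstar) = real Cs + real Ds" by (simp add: social_cost_def)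
  have "real (social_cost N p) / (real Cs + real Ds)
      \<le> 16 * real Cs * real Ds * (log 2 (card V))\<^sup>2 / (real Cs + real Ds)"
    using social_cost_bound by (rule divide_right_mono) simp
  then show "real (social_cost N p) / real (social_cost N pstar)
      \<le> 16 * (real Cs * real Ds / (real Cs + real Ds)) * (log 2 (real (card V)))\<^sup>2"
    unfolding opt_cost by (simp add: field_simps)
qed simp

end
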